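(* Let $\psi$ be a reduced function with $\delta(\psi)<\sqrt3$. Then either the family $(t_k)$ is finite, or $\psi(t_k)=t_{k-1}-1$ for every sufficiently large $k$.
   Context: $\mathcal{A}$ is an alphabet disjoint from $\mathbb{N}^*=\{1,2,\dots\}$. A function is a map $\psi:\mathbb{N}^*\to\mathbb{N}^*\sqcup\mathcal{A}$ such that for every $n\ge1$ either $\psi(n)\in\mathcal{A}$ or $1\le\psi(n)\le n-1$. Let $(t_k)_{k\ge0}$ be the (finite or infinite) family, in increasing order, of all $n\ge1$ with $\psi(n)\in\mathcal{A}$ or $1\le\psi(n)\le n-2$. $\psi$ is reduced if for every $k\ge1$ such that $t_k$ exists: $\psi(t_k)\ne\psi(t_{k-1})$, and either $\psi(t_k)\in\mathcal{A}$ or $\psi(t_k)<t_{k-1}$. For reduced $\psi$, define $n_1=0$ and for $i\ge1$: $n_{i+1}=2n_i-n_{\psi(i)}$ if $\psi(i)\in\mathbb{N}^*$, $n_{i+1}=2n_i+1$ if $\psi(i)\in\mathcal{A}$; then $\delta(\psi)=\limsup_{i\to\infty}n_{i+1}/n_i$. *)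

theory Defs
  imports "HOL-Analysis.Analysis" "HOL-Library.Liminf_Limsup"
begin

text \<open>A function psi : N* -> N* + A is modelled as psi :: nat => 'a + nat, where
  Inl a is a letter of the alphabet A (type 'a) and Inr m is the positive integer m.
  The value at 0 is irrelevant.\<close>

definition is_function :: "(nat \<Rightarrow> 'a + nat) \<Rightarrow> bool" where
  "is_function psi \<longleftrightarrow>
     (\<forall>n\<ge>1. (\<exists>a. psi n = Inl a) \<or> (\<exists>m. psi n = Inr m \<and> 1 \<le> m \<and> m + 1 \<le> n))"

text \<open>The set of all n >= 1 with psi n in A or 1 <= psi n <= n - 2 (the family (t_k)).\<close>
definition tset :: "(nat \<Rightarrow> 'a + nat) \<Rightarrow> nat set" where
  "tset psi = {n. n \<ge> 1 \<and> ((\<exists>a. psi n = Inl a) \<or> (\<exists>m. psi n = Inr m \<and> 1 \<le> m \<and> m + 2 \<le> n))}"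

text \<open>m and n are consecutive members t_{k-1} = m, t_k = n of the family.\<close>
definition consec :: "nat set \<Rightarrow> nat \<Rightarrow> nat \<Rightarrow> bool" where
  "consec T m n \<longleftrightarrow> m \<in> T \<and> n \<in> T \<and> m < n \<and> (\<forall>j. m < j \<and> j < n \<longrightarrow> j \<notin> T)"

definition reduced :: "(nat \<Rightarrow> 'a + nat) \<Rightarrow> bool" where
  "reduced psi \<longleftrightarrow> is_function psi \<and>
     (\<forall>m n. consec (tset psi) m n \<longrightarrow>
        psi n \<noteq> psi m \<and> ((\<exists>a. psi n = Inl a) \<or> (\<exists>j. psi n = Inr j \<and> j < m)))"

text \<open>The sequence n_i (i >= 1): n_1 = 0, n_{i+1} = 2 n_i - n_{psi i} or 2 n_i + 1.
  The guard on m is always satisfied for a function psi; it only ensures totality.\<close>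
fun nseq :: "(nat \<Rightarrow> 'a + nat) \<Rightarrow> nat \<Rightarrow> int" where
  "nseq psi 0 = 0"
| "nseq psi (Suc 0) = 0"
| "nseq psi (Suc (Suc i)) =
     (case psi (Suc i) of
        Inl a \<Rightarrow> 2 * nseq psi (Suc i) + 1
      | Inr m \<Rightarrow> 2 * nseq psi (Suc i) - (if m \<le> Suc i then nseq psi m else 0))"

definition delta :: "(nat \<Rightarrow> 'a + nat) \<Rightarrow> ereal" where
  "delta psi = limsup (\<lambda>i. ereal (real_of_int (nseq psi (Suc i)) / real_of_int (nseq psi i)))"

end

theory Submission
  imports Defs
begin

(* Write a i for nseq psi i. The increments a (i+1) - a i are positive and nondecreasing,
   and at every member t \<ge> 2 of the family, a t is at most the sum of the two increments
   around it (induction along the family, using psi t < the previous member).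
   If consecutive members m < n violate psi n = m - 1, then either psi n is a letter
   (ratio a (n+1) / a n \<ge> 2), or psi n \<le> m - 2 and a (n+1) - a n \<ge> a n - a (m-2);
   combined with the bound at m (and at m - 1), this forces a ratio \<ge> sqrt 3 at m - 1,
   m or n. Infinitely many violations thus contradict delta psi < sqrt 3. *)

lemma reduced_imp_is_function: "reduced psi \<Longrightarrow> is_function psi"
  unfolding reduced_def by simp

lemma reduced_consecD:
  "reduced psi \<Longrightarrow> consec (tset psi) m n \<Longrightarrow>
     (\<exists>a. psi n = Inl a) \<or> (\<exists>j. psi n = Inr j \<and> j < m)"
  unfolding reduced_def by blast

lemma is_function_first_letter: "is_function psi \<Longrightarrow> \<exists>a. psi 1 = Inl a"
  unfolding is_function_def by (drule spec[of _ 1]) auto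

lemma is_function_InrD:
  "is_function psi \<Longrightarrow> psi n = Inr m \<Longrightarrow> 1 \<le> n \<Longrightarrow> 1 \<le> m \<and> m < n"
  unfolding is_function_def by fastforce

lemma one_in_tset: "is_function psi \<Longrightarrow> 1 \<in> tset psi"
  using is_function_first_letter unfolding tset_def by auto

lemma not_in_tset_imp_Inr_pred:
  assumes "is_function psi" "1 \<le> n" "n \<notin> tset psi"
  shows "psi n = Inr (n - 1)"
proof -
  have "\<nexists>a. psi n = Inl a" using assms(2,3) unfolding tset_def by auto
  then obtain m where "psi n = Inr m" "1 \<le> m" "m + 1 \<le> n"
    using assms(1,2) unfolding is_function_def by blast
  with assms(2,3) show ?thesis unfolding tset_def by force
qed

lemma consec_pred_exists:
  assumes "is_function psi" "n \<in> tset psi" "2 \<le> n"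
  shows "\<exists>m. consec (tset psi) m n"
proof -
  let ?S = "{x \<in> tset psi. x < n}"
  have "finite ?S" "1 \<in> ?S" using one_in_tset[OF assms(1)] assms(3) by auto
  then have "consec (tset psi) (Max ?S) n"
    using Max_in[of ?S] Max_ge[of ?S] assms(2) unfolding consec_def by fastforce
  then show ?thesis ..
qed

lemma consec_le_pred: "consec T m n \<Longrightarrow> t \<in> T \<Longrightarrow> t < n \<Longrightarrow> t \<le> m"
  unfolding consec_def by (meson not_le)

lemma nseq_Suc_Inl: "1 \<le> i \<Longrightarrow> psi i = Inl a \<Longrightarrow> nseq psi (Suc i) = 2 * nseq psi i + 1"
  by (cases i) auto

lemma nseq_Suc_Inr:
  assumes "is_function psi" "1 \<le> i" "psi i = Inr m"
  shows "nseq psi (Suc i) = 2 * nseq psi i - nseq psi m"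
proof -
  have "m \<le> i" using is_function_InrD[OF assms(1,3,2)] by simp
  with assms(2,3) show ?thesis by (cases i) auto
qed

lemma nseq_two: "is_function psi \<Longrightarrow> nseq psi 2 = 1"
  using is_function_first_letter[of psi] by (auto simp: numeral_2_eq_2)

lemma nseq_incr_step:
  assumes "is_function psi" "1 \<le> i" "0 \<le> nseq psi i"
    and "\<And>q. 1 \<le> q \<Longrightarrow> q \<le> i \<Longrightarrow> nseq psi q \<le> nseq psi i"
  shows "nseq psi (Suc i) - nseq psi i \<le> nseq psi (Suc (Suc i)) - nseq psi (Suc i)"
proof (cases "psi (Suc i)")
  case (Inl a)
  then show ?thesis using nseq_Suc_Inl[of "Suc i"] assms(3) by simp
next
  case (Inr q)
  then have "nseq psi q \<le> nseq psi i"
    using is_function_InrD[OF assms(1) Inr] assms(4) by simp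
  then show ?thesis using nseq_Suc_Inr[OF assms(1) _ Inr] by simp
qed

lemma nseq_growth:
  assumes "is_function psi" "1 \<le> i"
  shows "0 \<le> nseq psi i \<and> 1 \<le> nseq psi (Suc i) - nseq psi i
    \<and> (\<forall>q. 1 \<le> q \<and> q \<le> i \<longrightarrow> nseq psi q \<le> nseq psi i)"
  using assms(2)
proof (induction i rule: nat_induct_at_least)
  case base
  then show ?case using nseq_two[OF assms(1)] by (auto simp: numeral_2_eq_2)
next
  case (Suc i)
  then have "nseq psi (Suc i) - nseq psi i \<le> nseq psi (Suc (Suc i)) - nseq psi (Suc i)"
    using nseq_incr_step[OF assms(1)] by blast
  with Suc show ?case by (auto simp: le_Suc_eq)
qed

lemma nseq_nonneg: "is_function psi \<Longrightarrow> 1 \<le> i \<Longrightarrow> 0 \<le> nseq psi i"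
  using nseq_growth by blast

lemma nseq_incr_ge_1: "is_function psi \<Longrightarrow> 1 \<le> i \<Longrightarrow> 1 \<le> nseq psi (Suc i) - nseq psi i"
  using nseq_growth by blast

lemma nseq_mono: "is_function psi \<Longrightarrow> 1 \<le> q \<Longrightarrow> q \<le> i \<Longrightarrow> nseq psi q \<le> nseq psi i"
  using nseq_growth[of psi i] by auto

lemma nseq_pos: "is_function psi \<Longrightarrow> 2 \<le> i \<Longrightarrow> 1 \<le> nseq psi i"
  using nseq_mono[of psi 2 i] nseq_two[of psi] by simp

lemma nseq_incr_mono:
  assumes "is_function psi" "1 \<le> i" "i \<le> j"
  shows "nseq psi (Suc i) - nseq psi i \<le> nseq psi (Suc j) - nseq psi j"
  using assms(3)
proof (induction j rule: nat_induct_at_least)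
  case (Suc j)
  with assms(2) show ?case
    using nseq_incr_step[OF assms(1), of j] nseq_growth[OF assms(1), of j] by auto
qed simp

lemma tset_nseq_le_incr_sum:
  assumes "reduced psi" "n \<in> tset psi" "2 \<le> n"
  shows "nseq psi n \<le> (nseq psi (Suc n) - nseq psi n) + (nseq psi n - nseq psi (n - 1))"
  using assms(2,3)
proof (induction n rule: less_induct)
  case (less n)
  have f: "is_function psi" using reduced_imp_is_function[OF assms(1)] .
  obtain m where c: "consec (tset psi) m n" using consec_pred_exists[OF f less(2,3)] ..
  then have mT: "m \<in> tset psi" and "m < n" "1 \<le> m" unfolding consec_def tset_def by auto
  have incr_n: "1 \<le> nseq psi n - nseq psi (n - 1)"
    using nseq_incr_ge_1[OF f, of "n - 1"] less(3) by simp
  consider a where "psi n = Inl a" | j where "psi n = Inr j" "j < m"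
    using reduced_consecD[OF assms(1) c] by blast
  then show ?case
  proof cases
    case 1
    then show ?thesis using nseq_Suc_Inl[of n psi] less(3) incr_n by simp
  next
    case (2 j)
    have "1 \<le> j" using is_function_InrD[OF f 2(1)] less(3) by simp
    then have "nseq psi j \<le> nseq psi (m - 1)" using nseq_mono[OF f] 2(2) by simp
    moreover have "nseq psi m \<le> (nseq psi (Suc m) - nseq psi m) + (nseq psi m - nseq psi (m - 1))"
      using less(1)[OF \<open>m < n\<close> mT] \<open>1 \<le> j\<close> 2(2) by simp
    moreover have "nseq psi (Suc m) - nseq psi m \<le> nseq psi n - nseq psi (n - 1)"
      using nseq_incr_mono[OF f \<open>1 \<le> m\<close>, of "n - 1"] \<open>m < n\<close> by (simp add: Suc_diff_1)
    moreover have "nseq psi (Suc m) \<le> nseq psi n" using nseq_mono[OF f, of "Suc m" n] \<open>m < n\<close> by simp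
    ultimately show ?thesis using nseq_Suc_Inr[OF f _ 2(1)] less(3) by simp
  qed
qed

(* In the two inequalities below, A = a m, Dm = a (m+1) - a m, D1 = a m - a (m-1),
   D2 = a (m-1) - a (m-2), S = a n - a m and Dn = a (n+1) - a n; the conclusion says
   sqrt 3 * a n \<le> a (n+1). Both rest on (3 - sqrt 3) / sqrt 3 = sqrt 3 - 1. *)

lemma sqrt3_ineq_slow_at_m:
  fixes A Dm D1 S Dn :: real
  assumes "Dm < (sqrt 3 - 1) * A" "A \<le> Dm + D1" "Dm \<le> S" "S + 2 * D1 \<le> Dn"
  shows "(sqrt 3 - 1) * (A + S) \<le> Dn"
proof -
  define s where "s = sqrt (3::real)"
  have s: "s * s = 3" "s < 2" unfolding s_def by (simp, simp add: real_less_lsqrt)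
  have "s * Dm \<le> s * ((s - 1) * A)"
    using assms(1) unfolding s_def by (intro mult_left_mono) auto
  also have "\<dots> = (3 - s) * A" using s(1) by (simp add: algebra_simps)
  finally have "s * Dm \<le> (3 - s) * A" .
  moreover have "(2 - s) * Dm \<le> (2 - s) * S" using assms(3) s(2) by (intro mult_left_mono) auto
  ultimately show ?thesis using assms(2,4) unfolding s_def[symmetric] by (simp add: algebra_simps)
qed

lemma sqrt3_ineq_slow_at_pred_m:
  fixes A Dm D1 D2 S Dn :: real
  assumes "D1 < (sqrt 3 - 1) * (A - D1)" "A - D1 \<le> D1 + D2" "A \<le> Dm + D1" "Dm \<le> S"
    "S + D1 + D2 \<le> Dn"
  shows "(sqrt 3 - 1) * (A + S) \<le> Dn"
proof -
  define s where "s = sqrt (3::real)"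
  have s: "s * s = 3" "1 < s" "s < 2" unfolding s_def
    by (simp, simp add: real_less_rsqrt, simp add: real_less_lsqrt)
  have "s * D1 \<le> (s - 1) * A" using assms(1) unfolding s_def[symmetric] by (simp add: algebra_simps)
  then have "(s - 1) * (s * D1) \<le> (s - 1) * ((s - 1) * A)" using s(2) by (intro mult_left_mono) auto
  then have "(3 - s) * D1 \<le> (4 - 2 * s) * A" using s(1) by (simp add: algebra_simps)
  moreover have "(2 - s) * (A - D1) \<le> (2 - s) * S" using assms(3,4) s(3) by (intro mult_left_mono) auto
  ultimately show ?thesis using assms(2,5) unfolding s_def[symmetric] by (simp add: algebra_simps)
qed

lemma consec_far_reference_imp_jump:
  assumes "reduced psi" "consec (tset psi) m n" "psi n = Inr j" "1 \<le> j" "j + 2 \<le> m"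
  shows "\<exists>i\<ge>m - 1. sqrt 3 * real_of_int (nseq psi i) \<le> real_of_int (nseq psi (Suc i))"
proof -
  let ?a = "\<lambda>i. real_of_int (nseq psi i)"
  have f: "is_function psi" using reduced_imp_is_function[OF assms(1)] .
  have mT: "m \<in> tset psi" and "m < n" using assms(2) unfolding consec_def by auto
  obtain k where m: "m = Suc (Suc k)" and "j \<le> k" "1 \<le> k"
    using assms(4,5) by (intro that[of "m - 2"]) auto
  have at_m: "?a m \<le> (?a (Suc m) - ?a m) + (?a m - ?a (Suc k))"
    using tset_nseq_le_incr_sum[OF assms(1) mT] m by simp
  have "nseq psi j \<le> nseq psi k" using nseq_mono[OF f assms(4) \<open>j \<le> k\<close>] .
  then have at_n: "(?a n - ?a m) + (?a m - ?a (Suc k)) + (?a (Suc k) - ?a k) \<le> ?a (Suc n) - ?a n"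
    using nseq_Suc_Inr[OF f _ assms(3)] \<open>m < n\<close> by simp
  have between: "?a (Suc m) - ?a m \<le> ?a n - ?a m"
    using nseq_mono[OF f, of "Suc m" n] \<open>m < n\<close> by simp
  show ?thesis
  proof (cases "sqrt 3 * ?a (Suc k) \<le> ?a m \<or> sqrt 3 * ?a m \<le> ?a (Suc m)")
    case True
    then show ?thesis using m by (auto intro: exI[of _ "Suc k"] exI[of _ m])
  next
    case False
    then have slow_m: "?a (Suc m) - ?a m < (sqrt 3 - 1) * ?a m"
      and slow_pred: "?a m - ?a (Suc k) < (sqrt 3 - 1) * (?a m - (?a m - ?a (Suc k)))"
      by (simp_all add: algebra_simps)
    have "(sqrt 3 - 1) * (?a m + (?a n - ?a m)) \<le> ?a (Suc n) - ?a n"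
    proof (cases "Suc k \<in> tset psi")
      case False
      then have "psi (Suc k) = Inr k" using not_in_tset_imp_Inr_pred[OF f] by fastforce
      then have "?a m - ?a (Suc k) = ?a (Suc k) - ?a k"
        using nseq_Suc_Inr[OF f, of "Suc k"] m by simp
      then show ?thesis using sqrt3_ineq_slow_at_m[OF slow_m at_m between] at_n by simp
    next
      case True
      then have "?a (Suc k) \<le> (?a m - ?a (Suc k)) + (?a (Suc k) - ?a k)"
        using tset_nseq_le_incr_sum[OF assms(1) True] \<open>1 \<le> k\<close> by (simp add: m del: nseq.simps)
      then show ?thesis using sqrt3_ineq_slow_at_pred_m[OF slow_pred _ at_m between at_n] by simp
    qed
    then show ?thesis using \<open>m < n\<close> by (intro exI[of _ n]) (auto simp: algebra_simps)
  qed
qed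

lemma consec_violation_imp_jump:
  assumes "reduced psi" "consec (tset psi) m n" "psi n \<noteq> Inr (m - 1)"
  shows "\<exists>i\<ge>m - 1. sqrt 3 * real_of_int (nseq psi i) \<le> real_of_int (nseq psi (Suc i))"
proof -
  have f: "is_function psi" using reduced_imp_is_function[OF assms(1)] .
  have "m < n" "1 \<le> m" using assms(2) unfolding consec_def tset_def by auto
  consider a where "psi n = Inl a" | j where "psi n = Inr j" "j < m"
    using reduced_consecD[OF assms(1,2)] by blast
  then show ?thesis
  proof cases
    case 1
    have "sqrt 3 * real_of_int (nseq psi n) \<le> 2 * real_of_int (nseq psi n)"
      using nseq_nonneg[OF f, of n] \<open>m < n\<close> by (intro mult_right_mono) (auto intro: real_le_lsqrt)
    then show ?thesis using nseq_Suc_Inl[of n psi, OF _ 1] \<open>m < n\<close> by (intro exI[of _ n]) auto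
  next
    case (2 j)
    then show ?thesis
      using consec_far_reference_imp_jump[OF assms(1,2) 2(1)] is_function_InrD[OF f 2(1)] assms(3)
        \<open>m < n\<close> \<open>1 \<le> m\<close> by fastforce
  qed
qed

lemma delta_less_imp_eventually_slow:
  assumes "is_function psi" "delta psi < ereal c"
  shows "\<exists>N. \<forall>i\<ge>N. real_of_int (nseq psi (Suc i)) < c * real_of_int (nseq psi i)"
proof -
  have "eventually (\<lambda>i. real_of_int (nseq psi (Suc i)) / real_of_int (nseq psi i) < c) sequentially"
    using Limsup_lessD[OF assms(2)[unfolded delta_def]] by simp
  then obtain N where N: "\<And>i. N \<le> i \<Longrightarrow> real_of_int (nseq psi (Suc i)) / real_of_int (nseq psi i) < c"
    unfolding eventually_sequentially by blast
  have "real_of_int (nseq psi (Suc i)) < c * real_of_int (nseq psi i)" if "max N 2 \<le> i" for i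
    using N[of i] nseq_pos[OF assms(1), of i] that by (simp add: pos_divide_less_eq mult.commute)
  then show ?thesis by blast
qed

theorem lemma7p1:
  fixes psi :: "nat \<Rightarrow> 'a + nat"
  assumes "reduced psi"
    and "delta psi < ereal (sqrt 3)"
  shows "finite (tset psi) \<or>
         (\<exists>K. \<forall>m n. consec (tset psi) m n \<and> n \<ge> K \<longrightarrow> psi n = Inr (m - 1))"
proof (rule ccontr)
  assume "\<not> ?thesis"
  then have "infinite (tset psi)"
    and violation: "\<And>K. \<exists>m n. consec (tset psi) m n \<and> K \<le> n \<and> psi n \<noteq> Inr (m - 1)"
    by blast+
  obtain N where slow: "\<And>i. N \<le> i \<Longrightarrow> real_of_int (nseq psi (Suc i)) < sqrt 3 * real_of_int (nseq psi i)"
    using delta_less_imp_eventually_slow[OF reduced_imp_is_function[OF assms(1)] assms(2)] by blast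
  obtain t where "t \<in> tset psi" "N + 1 \<le> t"
    using \<open>infinite (tset psi)\<close> unfolding infinite_nat_iff_unbounded_le by blast
  obtain m n where c: "consec (tset psi) m n" "Suc t \<le> n" "psi n \<noteq> Inr (m - 1)"
    using violation by blast
  have "t \<le> m" using consec_le_pred[OF c(1) \<open>t \<in> tset psi\<close>] c(2) by simp
  obtain i where "m - 1 \<le> i" "sqrt 3 * real_of_int (nseq psi i) \<le> real_of_int (nseq psi (Suc i))"
    using consec_violation_imp_jump[OF assms(1) c(1,3)] by blast
  moreover have "N \<le> i" using \<open>m - 1 \<le> i\<close> \<open>N + 1 \<le> t\<close> \<open>t \<le> m\<close> by simp
  ultimately show False using slow[of i] by simp
qed

end
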